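(* For $n\ge1$, with $a_0=a_1=1$ and $a_m=a_{m-1}+2(m-1)a_{m-2}$ for $m>1$, the number $a_{2n}$ (the rank of $\mathrm{SBr}(\mathrm{A}_{2n-1})$) satisfies $$a_{2n}=\sum_{i=0}^{n}\left(\sum_{\substack{p,q\ge0\\ p+2q=i}}\frac{n!}{p!\,q!\,(n-i)!}\right)^{2}2^{n-i}(n-i)!.$$
   Context: $\mathrm{SBr}(\mathrm{A}_{2n-1})$ is the $\mathbb{Z}[\delta^{\pm1}]$-span, inside the classical Brauer algebra on $2n$ strands, of the Brauer diagrams (perfect matchings of the dots $(j,1),(j,0)$, $1\le j\le 2n$) invariant under the reflection $(j,\epsilon)\mapsto(2n+1-j,\epsilon)$. *)

theory Defs
  imports Complex_Main
begin

fun seqA :: "nat \<Rightarrow> nat" where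
  "seqA 0 = 1"
| "seqA (Suc 0) = 1"
| "seqA (Suc (Suc m)) = seqA (Suc m) + 2 * Suc m * seqA m"

definition dots :: "nat \<Rightarrow> (nat \<times> nat) set" where
  "dots n = {1..2*n} \<times> {0,1}"

definition perfect_matching :: "'a set \<Rightarrow> 'a set set \<Rightarrow> bool" where
  "perfect_matching V M \<longleftrightarrow>
     (\<forall>e\<in>M. e \<subseteq> V \<and> card e = 2) \<and> (\<forall>v\<in>V. \<exists>!e. e \<in> M \<and> v \<in> e)"

definition brauer_diagrams :: "nat \<Rightarrow> (nat \<times> nat) set set set" where
  "brauer_diagrams n = {M. perfect_matching (dots n) M}"

definition refl_dot :: "nat \<Rightarrow> nat \<times> nat \<Rightarrow> nat \<times> nat" where
  "refl_dot n x = (2*n + 1 - fst x, snd x)"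

text \<open>Reflection-invariant Brauer diagrams: the Z[delta^(+-1)]-basis of SBr(A_(2n-1)).\<close>
definition sym_brauer_diagrams :: "nat \<Rightarrow> (nat \<times> nat) set set set" where
  "sym_brauer_diagrams n =
     {M \<in> brauer_diagrams n. (\<lambda>e. refl_dot n ` e) ` M = M}"

definition rank_SBr :: "nat \<Rightarrow> nat" where
  "rank_SBr n = card (sym_brauer_diagrams n)"

end

theory Submission
  imports Defs
begin

text \<open>
  The reflection is a fixed-point-free involution \<open>s\<close> of the \<open>4n\<close> dots.  For any
  fixed-point-free involution of a set of \<open>2m\<close> elements, the \<open>s\<close>-invariant perfect matchings
  number \<open>a\<^sub>m\<close>: the partner of a fixed vertex \<open>x\<close> is either \<open>s x\<close> (one choice, \<open>a\<^sub>m\<^sub>-\<^sub>1\<close>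
  completions) or another vertex \<open>y\<close> (\<open>2(m-1)\<close> choices, forcing also the edge \<open>{s x, s y}\<close>,
  \<open>a\<^sub>m\<^sub>-\<^sub>2\<close> completions).  Hence the rank is \<open>a\<^sub>2\<^sub>n\<close>.

  With \<open>b\<^sub>j = a\<^sub>j / j!\<close>, the coefficients of \<open>exp (x + x\<^sup>2)\<close>, we prove the product
  formula \<open>(m+l choose m) b\<^sub>m\<^sub>+\<^sub>l = \<Sum>\<^sub>k b\<^sub>m\<^sub>-\<^sub>k b\<^sub>l\<^sub>-\<^sub>k 2\<^sup>k / k!\<close> by induction on \<open>m\<close> from the recurrence
  \<open>j b\<^sub>j = b\<^sub>j\<^sub>-\<^sub>1 + 2 b\<^sub>j\<^sub>-\<^sub>2\<close>.  Its diagonal case \<open>m = l = n\<close> gives the outer sum of the theorem,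
  once the inner sums over \<open>p + 2q = i\<close> are identified with \<open>n!/(n-i)! \<cdot> b\<^sub>i\<close> (they satisfy
  the same recurrence).
\<close>

section \<open>Perfect matchings\<close>

lemma pm_edgeD: "perfect_matching V M \<Longrightarrow> e \<in> M \<Longrightarrow> e \<subseteq> V \<and> card e = 2"
  by (simp add: perfect_matching_def)

lemma pm_cover: "perfect_matching V M \<Longrightarrow> v \<in> V \<Longrightarrow> \<exists>e\<in>M. v \<in> e"
  unfolding perfect_matching_def by blast

lemma pm_unique:
  "perfect_matching V M \<Longrightarrow> e \<in> M \<Longrightarrow> e' \<in> M \<Longrightarrow> v \<in> e \<Longrightarrow> v \<in> e' \<Longrightarrow> e = e'"
  unfolding perfect_matching_def by (metis subsetD)

lemma pm_intro:
  assumes "\<And>e. e \<in> M \<Longrightarrow> e \<subseteq> V \<and> card e = 2"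
    and "\<And>v. v \<in> V \<Longrightarrow> \<exists>e\<in>M. v \<in> e"
    and "\<And>v e e'. e \<in> M \<Longrightarrow> e' \<in> M \<Longrightarrow> v \<in> e \<Longrightarrow> v \<in> e' \<Longrightarrow> e = e'"
  shows "perfect_matching V M"
  unfolding perfect_matching_def using assms by metis

lemma finite_perfect_matchings: "finite V \<Longrightarrow> finite {M. perfect_matching V M}"
  by (rule finite_subset[of _ "Pow (Pow V)"]) (auto dest: pm_edgeD)

lemma perfect_matching_empty: "perfect_matching {} M \<longleftrightarrow> M = {}"
  unfolding perfect_matching_def by fastforce

lemma pm_remove_edges:
  assumes pm: "perfect_matching V M" and "e \<in> M" "e' \<in> M"
  shows "perfect_matching (V - (e \<union> e')) (M - {e, e'})"
proof (rule pm_intro)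
  fix d assume "d \<in> M - {e, e'}"
  then show "d \<subseteq> V - (e \<union> e') \<and> card d = 2"
    using pm_edgeD[OF pm] pm_unique[OF pm] \<open>e \<in> M\<close> \<open>e' \<in> M\<close> by blast
next
  fix v assume "v \<in> V - (e \<union> e')"
  then show "\<exists>d\<in>M - {e, e'}. v \<in> d" using pm_cover[OF pm] by blast
qed (use pm_unique[OF pm] in blast)

lemma pm_insert_edges:
  assumes pm: "perfect_matching W N" and "card e = 2" "card e' = 2"
    and "e \<inter> W = {}" "e' \<inter> W = {}" and "e = e' \<or> e \<inter> e' = {}"
  shows "perfect_matching (W \<union> e \<union> e') (insert e (insert e' N))"
proof (rule pm_intro)
  fix v d d' assume "d \<in> insert e (insert e' N)" "d' \<in> insert e (insert e' N)" "v \<in> d" "v \<in> d'"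
  then show "d = d'" using assms pm_unique[OF pm] pm_edgeD[OF pm] by blast
qed (use assms pm_edgeD[OF pm] pm_cover[OF pm] in auto)

lemma pm_partner:
  assumes pm: "perfect_matching V M" and "x \<in> V"
  obtains y where "y \<in> V - {x}" "{x, y} \<in> M"
proof -
  obtain e where e: "e \<in> M" "x \<in> e" using pm_cover[OF pm \<open>x \<in> V\<close>] by blast
  then obtain y where "e = {x, y}" "y \<noteq> x"
    using pm_edgeD[OF pm] by (metis card_2_iff insert_commute insertE singletonD)
  then show thesis using that e pm_edgeD[OF pm] by blast
qed

lemma card_by_partner:
  assumes "finite V" "x \<in> V" and pms: "\<And>M. M \<in> \<M> \<Longrightarrow> perfect_matching V M"
  shows "card \<M> = (\<Sum>y\<in>V - {x}. card {M \<in> \<M>. {x, y} \<in> M})"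
proof -
  have cover: "\<M> = (\<Union>y\<in>V - {x}. {M \<in> \<M>. {x, y} \<in> M})"
    using pm_partner[OF pms \<open>x \<in> V\<close>] by blast
  have "finite {M \<in> \<M>. {x, y} \<in> M}" for y
    by (rule finite_subset[OF _ finite_perfect_matchings[OF \<open>finite V\<close>]]) (use pms in blast)
  moreover have "{M \<in> \<M>. {x, y} \<in> M} \<inter> {M \<in> \<M>. {x, y'} \<in> M} = {}"
    if "y \<in> V - {x}" "y' \<in> V - {x}" "y \<noteq> y'" for y y'
    using that pm_unique[OF pms, of _ "{x, y}" "{x, y'}" x] by (auto simp: doubleton_eq_iff)
  ultimately show ?thesis
    by (subst cover, intro card_UN_disjoint) (use \<open>finite V\<close> in auto)
qed

section \<open>Perfect matchings invariant under a fixed-point-free involution\<close>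

definition fp_free_involution :: "('a \<Rightarrow> 'a) \<Rightarrow> 'a set \<Rightarrow> bool" where
  "fp_free_involution s V \<longleftrightarrow> (\<forall>x\<in>V. s x \<in> V \<and> s x \<noteq> x \<and> s (s x) = x)"

definition invariant_matchings :: "('a \<Rightarrow> 'a) \<Rightarrow> 'a set \<Rightarrow> 'a set set set" where
  "invariant_matchings s V = {M. perfect_matching V M \<and> (\<lambda>e. s ` e) ` M = M}"

lemma fp_free_involutionD:
  "fp_free_involution s V \<Longrightarrow> x \<in> V \<Longrightarrow> s x \<in> V \<and> s x \<noteq> x \<and> s (s x) = x"
  unfolding fp_free_involution_def by blast

lemma fp_free_involution_image_image:
  "fp_free_involution s V \<Longrightarrow> e \<subseteq> V \<Longrightarrow> s ` s ` e = e"
  unfolding fp_free_involution_def image_image by (force simp: image_iff)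

lemma fp_free_involution_Diff:
  assumes f: "fp_free_involution s V" and "D \<subseteq> V" "s ` D \<subseteq> D"
  shows "fp_free_involution s (V - D)"
  unfolding fp_free_involution_def
proof
  fix z assume z: "z \<in> V - D"
  have "s z \<notin> D"
    using z assms fp_free_involutionD[OF f, of z] by (metis DiffD1 DiffD2 image_subset_iff)
  then show "s z \<in> V - D \<and> s z \<noteq> z \<and> s (s z) = z" using z fp_free_involutionD[OF f] by blast
qed

lemma involution_image_Diff:
  assumes "\<And>x. x \<in> A \<Longrightarrow> g (g x) = x" "g ` A = A" "B \<subseteq> A" "g ` B = B"
  shows "g ` (A - B) = A - B"
proof -
  have stays: "g x \<in> A - B" if "x \<in> A - B" for x
    using that assms by (metis Diff_iff image_eqI)
  then have "x \<in> g ` (A - B)" if "x \<in> A - B" for x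
    using that assms(1) by (metis DiffD1 image_eqI)
  then show ?thesis using stays by blast
qed

lemma card_invariant_matchings_through:
  assumes f: "fp_free_involution s V" and eV: "e \<subseteq> V" and ce: "card e = 2"
    and alt: "s ` e = e \<or> s ` e \<inter> e = {}"
  shows "card {M \<in> invariant_matchings s V. e \<in> M}
       = card (invariant_matchings s (V - (e \<union> s ` e)))"
proof (rule bij_betw_same_card[of "\<lambda>M. M - {e, s ` e}"],
       rule bij_betw_byWitness[where f' = "\<lambda>N. insert e (insert (s ` e) N)"])
  let ?S = "\<lambda>d. s ` d" and ?W = "V - (e \<union> s ` e)"
  have ssd: "s ` s ` d = d" if "d \<subseteq> V" for d
    using fp_free_involution_image_image[OF f that] .
  have seV: "s ` e \<subseteq> V" using f eV unfolding fp_free_involution_def by blast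
  have "inj_on s e"
    using f eV unfolding fp_free_involution_def inj_on_def by (metis subsetD)
  then have cse: "card (s ` e) = 2" using ce by (simp add: card_image)
  have ne: "e \<noteq> {}" "s ` e \<noteq> {}" using ce cse by auto
  show "\<forall>M\<in>{M \<in> invariant_matchings s V. e \<in> M}. insert e (insert (s ` e) (M - {e, s ` e})) = M"
  proof clarify
    fix M assume "M \<in> invariant_matchings s V" "e \<in> M"
    then have "s ` e \<in> M" by (metis (mono_tags, lifting) image_eqI invariant_matchings_def mem_Collect_eq)
    then show "insert e (insert (s ` e) (M - {e, s ` e})) = M" using \<open>e \<in> M\<close> by blast
  qed
  show "\<forall>N\<in>invariant_matchings s ?W. insert e (insert (s ` e) N) - {e, s ` e} = N"
  proof
    fix N assume "N \<in> invariant_matchings s ?W"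
    then have pm: "perfect_matching ?W N" by (simp add: invariant_matchings_def)
    have "e \<notin> N" "s ` e \<notin> N" using pm_edgeD[OF pm] ne by auto
    then show "insert e (insert (s ` e) N) - {e, s ` e} = N" by blast
  qed
  show "(\<lambda>M. M - {e, s ` e}) ` {M \<in> invariant_matchings s V. e \<in> M} \<subseteq> invariant_matchings s ?W"
  proof (rule image_subsetI, clarify)
    fix M assume M: "M \<in> invariant_matchings s V" "e \<in> M"
    then have pm: "perfect_matching V M" and inv: "?S ` M = M"
      by (simp_all add: invariant_matchings_def)
    then have "s ` e \<in> M" using \<open>e \<in> M\<close> by (metis image_eqI)
    have "?S ` (M - {e, s ` e}) = M - {e, s ` e}"
    proof (rule involution_image_Diff[OF _ inv])
      show "s ` s ` d = d" if "d \<in> M" for d using ssd pm_edgeD[OF pm that] by blast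
      show "{e, s ` e} \<subseteq> M" using \<open>e \<in> M\<close> \<open>s ` e \<in> M\<close> by blast
      show "?S ` {e, s ` e} = {e, s ` e}" using ssd[OF eV] by auto
    qed
    then show "M - {e, s ` e} \<in> invariant_matchings s ?W"
      using pm_remove_edges[OF pm \<open>e \<in> M\<close> \<open>s ` e \<in> M\<close>] unfolding invariant_matchings_def by blast
  qed
  show "(\<lambda>N. insert e (insert (s ` e) N)) ` invariant_matchings s ?W
      \<subseteq> {M \<in> invariant_matchings s V. e \<in> M}"
  proof (rule image_subsetI)
    fix N assume "N \<in> invariant_matchings s ?W"
    then have pm: "perfect_matching ?W N" and inv: "?S ` N = N"
      by (simp_all add: invariant_matchings_def)
    have "perfect_matching (?W \<union> e \<union> s ` e) (insert e (insert (s ` e) N))"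
      using alt by (intro pm_insert_edges[OF pm ce cse]) auto
    moreover have "?W \<union> e \<union> s ` e = V" using eV seV by blast
    moreover have "?S ` insert e (insert (s ` e) N) = insert e (insert (s ` e) N)"
      using inv ssd[OF eV] by (simp add: insert_commute)
    ultimately show "insert e (insert (s ` e) N) \<in> {M \<in> invariant_matchings s V. e \<in> M}"
      by (simp add: invariant_matchings_def)
  qed
qed

text \<open>The recurrence of \<open>a\<close> in the uniform shape produced by the count below.\<close>
lemma seqA_Suc: "seqA (Suc k) = seqA k + 2 * k * seqA (k - 1)"
  by (cases k) simp_all

text \<open>A vertex \<open>x\<close> is matched either with
  \<open>s x\<close> (leaving \<open>2(m-1)\<close> vertices), or with one of the \<open>2(m-1)\<close> other vertices \<open>y\<close>, which
  forces the edge \<open>{s x, s y}\<close> as well (leaving \<open>2(m-2)\<close> vertices).\<close>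
theorem card_invariant_matchings:
  assumes "finite V" "card V = 2 * m" "fp_free_involution s V"
  shows "card (invariant_matchings s V) = seqA m"
  using assms
proof (induction m arbitrary: V rule: less_induct)
  case (less m V)
  note fin = \<open>finite V\<close> and f = \<open>fp_free_involution s V\<close>
  show ?case
  proof (cases m)
    case 0
    then have "V = {}" using less.prems by simp
    then have "invariant_matchings s V = {{}}"
      by (auto simp: invariant_matchings_def perfect_matching_empty)
    then show ?thesis using 0 by simp
  next
    case (Suc k)
    then obtain x where x: "x \<in> V" using less.prems by fastforce
    have sx: "s x \<in> V" "s x \<noteq> x" "s (s x) = x" using fp_free_involutionD[OF f x] by auto
    define P where "P y = {M \<in> invariant_matchings s V. {x, y} \<in> M}" for y
    define R where "R = V - {x, s x}"
    have cR: "card R = 2 * k"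
      using less.prems Suc x sx by (simp add: R_def card_Diff_subset)
    have "V - {x} = insert (s x) R" "s x \<notin> R" using sx x by (auto simp: R_def)
    then have by_partner: "card (invariant_matchings s V) = card (P (s x)) + (\<Sum>y\<in>R. card (P y))"
      using card_by_partner[OF fin x, of "invariant_matchings s V"] fin
      by (simp add: P_def R_def invariant_matchings_def)
    have through_sx: "card (P (s x)) = seqA k"
    proof -
      have "card (P (s x)) = card (invariant_matchings s R)"
        unfolding P_def R_def using x sx
        by (subst card_invariant_matchings_through[OF f]) (auto simp: insert_commute)
      also have "\<dots> = seqA k"
        using Suc fin cR fp_free_involution_Diff[OF f, of "{x, s x}"] x sx
        by (intro less.IH) (auto simp: R_def)
      finally show ?thesis .
    qed
    have through_other: "card (P y) = seqA (k - 1)" if "y \<in> R" for y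
    proof -
      have y: "y \<in> V" "y \<noteq> x" "y \<noteq> s x" using that by (auto simp: R_def)
      have sy: "s y \<in> V" "s y \<noteq> y" "s (s y) = y" using fp_free_involutionD[OF f y(1)] by auto
      have distinct: "s y \<noteq> x" "s y \<noteq> s x" using sx sy y by metis+
      define D where "D = {x, y, s x, s y}"
      have DV: "D \<subseteq> V" and cD: "card D = 4" using x y sx sy distinct by (auto simp: D_def)
      have "card (P y) = card (invariant_matchings s (V - D))"
        unfolding P_def D_def using x y sx sy distinct
        by (subst card_invariant_matchings_through[OF f]) (auto simp: insert_commute)
      also have "\<dots> = seqA (k - 1)"
      proof (rule less.IH)
        show "card (V - D) = 2 * (k - 1)"
          using less.prems Suc DV cD fin by (simp add: card_Diff_subset finite_subset)
        show "fp_free_involution s (V - D)"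
          using fp_free_involution_Diff[OF f DV] sx sy by (auto simp: D_def)
      qed (use Suc fin in auto)
      finally show ?thesis .
    qed
    show ?thesis
      using by_partner through_sx through_other cR Suc seqA_Suc[of k] by simp
  qed
qed

text \<open>The reflection \<open>(j, \<epsilon>) \<mapsto> (2n+1-j, \<epsilon>)\<close> has no fixed dots, since \<open>2n+1\<close> is odd.\<close>
lemma fp_free_involution_refl_dot: "fp_free_involution (refl_dot n) (dots n)"
  unfolding fp_free_involution_def dots_def refl_dot_def by auto presburger+

theorem rank_SBr_eq: "rank_SBr n = seqA (2 * n)"
proof -
  have "sym_brauer_diagrams n = invariant_matchings (refl_dot n) (dots n)"
    unfolding sym_brauer_diagrams_def brauer_diagrams_def invariant_matchings_def by simp
  moreover have "finite (dots n)" "card (dots n) = 2 * (2 * n)"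
    unfolding dots_def by (simp_all add: card_cartesian_product)
  ultimately show ?thesis
    unfolding rank_SBr_def by (simp add: card_invariant_matchings fp_free_involution_refl_dot)
qed

section \<open>The coefficients \<open>b\<^sub>j = a\<^sub>j / j!\<close>\<close>

text \<open>\<open>b\<^sub>j\<close> is the \<open>j\<close>-th Taylor coefficient of \<open>exp (x + x\<^sup>2)\<close>; it is extended by zero to
  negative indices so that its recurrence holds for every integer.\<close>
definition coeffB :: "int \<Rightarrow> real" where
  "coeffB j = (if j < 0 then 0 else real (seqA (nat j)) / fact (nat j))"

lemma coeffB_neg: "j < 0 \<Longrightarrow> coeffB j = 0"
  by (simp add: coeffB_def)

lemma coeffB_of_nat: "coeffB (int m) = real (seqA m) / fact m"
  by (simp add: coeffB_def)

lemma Suc_times_divide_fact_Suc: "real (Suc k) * x / fact (Suc k) = x / (fact k :: real)"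
  by (simp add: fact_Suc[of k] del: fact_Suc)

lemma Suc_divide_fact_Suc_mult: "real (Suc k) / (fact (Suc k) * y) = 1 / (fact k * y :: real)"
proof -
  have "fact (Suc k) * y = real (Suc k) * (fact k * y)"
    by (simp add: fact_Suc[of k] del: fact_Suc of_nat_Suc)
  then show ?thesis by simp
qed

lemma Suc_divide_fact_Suc_mult': "real (Suc k) / (y * fact (Suc k)) = 1 / (y * fact k :: real)"
  using Suc_divide_fact_Suc_mult[of k y] by (simp only: mult.commute)

lemma coeffB_rec: "of_int j * coeffB j = coeffB (j - 1) + 2 * coeffB (j - 2)"
proof (cases "j < 2")
  case True
  then consider "j < 0" | "j = 0" | "j = 1" by linarith
  then show ?thesis by cases (auto simp: coeffB_def)
next
  case False
  then obtain m where j: "j = int (Suc (Suc m))" by (intro that[of "nat j - 2"]) auto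
  have expand: "real (seqA (Suc (Suc m))) = real (seqA (Suc m)) + real (Suc m) * (2 * real (seqA m))"
    by (simp add: algebra_simps)
  have "real (Suc (Suc m)) * (real (seqA (Suc (Suc m))) / fact (Suc (Suc m)))
      = real (seqA (Suc (Suc m))) / fact (Suc m)"
    by (simp only: times_divide_eq_right Suc_times_divide_fact_Suc)
  also have "\<dots> = real (seqA (Suc m)) / fact (Suc m) + 2 * (real (seqA m) / fact m)"
    unfolding expand by (simp only: add_divide_distrib Suc_times_divide_fact_Suc times_divide_eq_right)
  finally have "real (Suc (Suc m)) * (real (seqA (Suc (Suc m))) / fact (Suc (Suc m)))
      = real (seqA (Suc m)) / fact (Suc m) + 2 * (real (seqA m) / fact m)" .
  moreover have "j - 1 = int (Suc m)" "j - 2 = int m" using j by auto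
  ultimately show ?thesis unfolding j by (simp only: coeffB_of_nat of_int_of_nat_eq)
qed

section \<open>A product formula for the coefficients\<close>

text \<open>Its terms vanish for \<open>k > m\<close>,
  so it does not depend on \<open>N\<close> once \<open>N \<ge> m\<close>.\<close>
definition pair_sum :: "nat \<Rightarrow> int \<Rightarrow> int \<Rightarrow> real" where
  "pair_sum N m l = (\<Sum>k=0..N. coeffB (m - int k) * coeffB (l - int k) * 2 ^ k / fact k)"

lemma pair_sum_sym: "pair_sum N m l = pair_sum N l m"
  by (simp add: pair_sum_def mult.commute mult.left_commute)

lemma pair_sum_Suc: "m \<le> int N \<Longrightarrow> pair_sum (Suc N) m l = pair_sum N m l"
  by (simp add: pair_sum_def coeffB_neg)

lemma pair_sum_stable: "m \<le> int N \<Longrightarrow> pair_sum (N + d) m l = pair_sum N m l"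
  by (induction d) (simp_all add: pair_sum_Suc)

lemma pair_sum_zero_left: "pair_sum N 0 l = coeffB l"
  by (induction N) (simp_all add: pair_sum_Suc, simp add: pair_sum_def coeffB_def)

text \<open>The recurrence of \<open>b\<close>, applied to the second factor, together with
  \<open>k \<cdot> 2\<^sup>k/k! = 2 \<cdot> 2\<^sup>k\<^sup>-\<^sup>1/(k-1)!\<close> gives a recurrence for \<open>S\<close> in its second argument.\<close>
lemma pair_sum_rec:
  assumes "m \<le> int N"
  shows "(of_int l + 1) * pair_sum (Suc N) m (l + 1)
       = pair_sum (Suc N) m l + 2 * pair_sum (Suc N) m (l - 1) + 2 * pair_sum (Suc N) (m - 1) l"
proof -
  define f where "f k = coeffB (m - int k) * coeffB (l + 1 - int k) * 2 ^ k / fact k" for k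
  have termwise: "(of_int l + 1) * f k = coeffB (m - int k) * coeffB (l - int k) * 2 ^ k / fact k
       + 2 * (coeffB (m - int k) * coeffB (l - 1 - int k) * 2 ^ k / fact k) + real k * f k" for k
  proof -
    have "(of_int l + 1) * f k
        = of_int (l + 1 - int k) * coeffB (l + 1 - int k) * coeffB (m - int k) * 2 ^ k / fact k
          + real k * f k"
      by (simp add: f_def field_simps)
    also have "of_int (l + 1 - int k) * coeffB (l + 1 - int k)
        = coeffB (l - int k) + 2 * coeffB (l - 1 - int k)"
      using coeffB_rec[of "l + 1 - int k"] by (simp add: algebra_simps)
    finally show ?thesis by (simp add: algebra_simps add_divide_distrib)
  qed
  have shift: "(\<Sum>k=0..Suc N. real k * f k) = 2 * pair_sum N (m - 1) l"
  proof -
    have "(\<Sum>k=0..Suc N. real k * f k) = (\<Sum>k=0..N. real (Suc k) * f (Suc k))"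
      by (subst sum.atLeast0_atMost_Suc_shift) simp
    also have "\<dots> = (\<Sum>k=0..N. 2 * (coeffB (m - 1 - int k) * coeffB (l - int k) * 2 ^ k / fact k))"
    proof (rule sum.cong)
      fix k
      have idx: "m - int (Suc k) = m - 1 - int k" "l + 1 - int (Suc k) = l - int k" by auto
      show "real (Suc k) * f (Suc k)
          = 2 * (coeffB (m - 1 - int k) * coeffB (l - int k) * 2 ^ k / fact k)"
        unfolding f_def idx by (simp add: fact_Suc[of k] del: fact_Suc of_nat_Suc)
    qed simp
    finally show ?thesis by (simp add: pair_sum_def sum_distrib_left)
  qed
  have "(of_int l + 1) * pair_sum (Suc N) m (l + 1) = (\<Sum>k=0..Suc N. (of_int l + 1) * f k)"
    unfolding pair_sum_def f_def by (simp only: sum_distrib_left)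
  also have "\<dots> = pair_sum (Suc N) m l + 2 * pair_sum (Suc N) m (l - 1) + 2 * pair_sum N (m - 1) l"
    by (simp only: termwise sum.distrib pair_sum_def sum_distrib_left shift)
  also have "pair_sum N (m - 1) l = pair_sum (Suc N) (m - 1) l"
    using pair_sum_Suc[of "m - 1" N l] assms by simp
  finally show ?thesis .
qed

text \<open>Applying the recurrence in both arguments and using symmetry of \<open>S\<close>, the two
  right-hand sides coincide: a unit can be moved from one argument to the other.\<close>
lemma pair_sum_exchange:
  assumes "m \<le> int N" "l \<le> int N"
  shows "(of_int m + 1) * pair_sum (Suc N) (m + 1) l = (of_int l + 1) * pair_sum (Suc N) m (l + 1)"
proof -
  have "(of_int m + 1) * pair_sum (Suc N) (m + 1) l = (of_int m + 1) * pair_sum (Suc N) l (m + 1)"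
    by (simp only: pair_sum_sym[of _ "m + 1"])
  also have "\<dots> = pair_sum (Suc N) m l + 2 * pair_sum (Suc N) m (l - 1) + 2 * pair_sum (Suc N) (m - 1) l"
    unfolding pair_sum_rec[OF assms(2)] pair_sum_sym[of _ l m] pair_sum_sym[of _ l "m - 1"]
      pair_sum_sym[of _ "l - 1" m] by simp
  also have "\<dots> = (of_int l + 1) * pair_sum (Suc N) m (l + 1)"
    by (rule pair_sum_rec[OF assms(1), symmetric])
  finally show ?thesis .
qed

text \<open>The product formula \<open>S(m, l) = (m+l choose m) b\<^sub>m\<^sub>+\<^sub>l\<close>, i.e. the coefficient form of
  \<open>exp ((x+y) + (x+y)\<^sup>2) = exp (x + x\<^sup>2) exp (y + y\<^sup>2) exp (2xy)\<close>.  Induction on \<open>m\<close>: the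
  exchange step moves a unit from \<open>m\<close> to \<open>l\<close>, matching the identity
  \<open>(m+1) (m+l+1 choose m+1) = (l+1) (m+l+1 choose m)\<close>.\<close>
lemma pair_sum_product_formula:
  "m + l \<le> N \<Longrightarrow> pair_sum N (int m) (int l) = real ((m + l) choose m) * coeffB (int (m + l))"
proof (induction m arbitrary: l)
  case 0
  then show ?case by (simp add: pair_sum_zero_left)
next
  case (Suc m l)
  then obtain N' where N: "N = Suc N'" by (cases N) auto
  have "Suc l * ((m + Suc l) choose m) = Suc m * ((Suc m + l) choose Suc m)"
    using Suc_times_binomial_add[of m l] by (simp only: add_Suc add_Suc_right)
  then have binomial: "real (Suc l) * real ((m + Suc l) choose m)
      = real (Suc m) * real ((Suc m + l) choose Suc m)"
    by (metis of_nat_mult)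
  have "real (Suc m) * pair_sum N (int (Suc m)) (int l)
      = real (Suc l) * pair_sum N (int m) (int (Suc l))"
    using pair_sum_exchange[of "int m" N' "int l"] Suc.prems N by (simp add: add.commute)
  also have "\<dots> = real (Suc m) * (real ((Suc m + l) choose Suc m) * coeffB (int (Suc m + l)))"
    using Suc.IH[of "Suc l"] Suc.prems binomial by simp
  finally show ?case by simp
qed

section \<open>The inner sums\<close>

text \<open>The inner sum of the theorem runs over the pairs \<open>(p, q)\<close> of weight \<open>p + 2q = i\<close>;
  up to the factor \<open>n!/(n-i)!\<close> it is the coefficient of \<open>x\<^sup>i\<close> in \<open>exp x \<cdot> exp (x\<^sup>2)\<close>.\<close>
definition weight_pairs :: "nat \<Rightarrow> (nat \<times> nat) set" where
  "weight_pairs i = {(p, q). p + 2 * q = i}"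

definition inner_sum :: "nat \<Rightarrow> real" where
  "inner_sum i = (\<Sum>(p, q)\<in>weight_pairs i. 1 / (fact p * fact q))"

lemma finite_weight_pairs: "finite (weight_pairs i)"
  by (rule finite_subset[of _ "{0..i} \<times> {0..i}"]) (auto simp: weight_pairs_def)

lemma inner_sum_shift_p:
  "inner_sum i = (\<Sum>(p, q)\<in>weight_pairs (Suc i). real p / (fact p * fact q))"
  unfolding inner_sum_def
proof (rule sum.reindex_bij_witness_not_neutral
    [where S' = "{}" and T' = "{(p, q) \<in> weight_pairs (Suc i). p = 0}"
      and j = "\<lambda>(p, q). (Suc p, q)" and i = "\<lambda>(p, q). (p - 1, q)"])
  show "finite {(p, q) \<in> weight_pairs (Suc i). p = 0}"
    by (rule finite_subset[OF _ finite_weight_pairs]) auto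
  fix a assume "a \<in> weight_pairs i"
  then show "(case (case a of (p, q) \<Rightarrow> (Suc p, q)) of (p, q) \<Rightarrow> real p / (fact p * fact q))
      = (case a of (p, q) \<Rightarrow> 1 / (fact p * fact q))"
    by (cases a) (simp only: prod.case Suc_divide_fact_Suc_mult)
qed (auto simp: weight_pairs_def)

lemma inner_sum_shift_q:
  "inner_sum i = (\<Sum>(p, q)\<in>weight_pairs (Suc (Suc i)). real q / (fact p * fact q))"
  unfolding inner_sum_def
proof (rule sum.reindex_bij_witness_not_neutral
    [where S' = "{}" and T' = "{(p, q) \<in> weight_pairs (Suc (Suc i)). q = 0}"
      and j = "\<lambda>(p, q). (p, Suc q)" and i = "\<lambda>(p, q). (p, q - 1)"])
  show "finite {(p, q) \<in> weight_pairs (Suc (Suc i)). q = 0}"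
    by (rule finite_subset[OF _ finite_weight_pairs]) auto
  fix a assume "a \<in> weight_pairs i"
  then show "(case (case a of (p, q) \<Rightarrow> (p, Suc q)) of (p, q) \<Rightarrow> real q / (fact p * fact q))
      = (case a of (p, q) \<Rightarrow> 1 / (fact p * fact q))"
    by (cases a) (simp only: prod.case Suc_divide_fact_Suc_mult')
qed (auto simp: weight_pairs_def)

text \<open>Splitting the weight \<open>i + 2 = p + 2q\<close> gives the recurrence of \<open>b\<close>.\<close>
lemma inner_sum_rec:
  "real (Suc (Suc i)) * inner_sum (Suc (Suc i)) = inner_sum (Suc i) + 2 * inner_sum i"
proof -
  have "real (Suc (Suc i)) * inner_sum (Suc (Suc i))
      = (\<Sum>(p, q)\<in>weight_pairs (Suc (Suc i)). real (Suc (Suc i)) / (fact p * fact q))"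
    unfolding inner_sum_def sum_distrib_left by (simp add: case_prod_beta)
  also have "\<dots> = (\<Sum>(p, q)\<in>weight_pairs (Suc (Suc i)).
      real p / (fact p * fact q) + 2 * (real q / (fact p * fact q)))"
  proof (rule sum.cong)
    fix x assume "x \<in> weight_pairs (Suc (Suc i))"
    then have "real (Suc (Suc i)) = real (fst x) + 2 * real (snd x)"
      by (auto simp: weight_pairs_def)
    then show "(case x of (p, q) \<Rightarrow> real (Suc (Suc i)) / (fact p * fact q))
        = (case x of (p, q) \<Rightarrow> real p / (fact p * fact q) + 2 * (real q / (fact p * fact q)))"
      by (simp add: case_prod_beta add_divide_distrib)
  qed simp
  also have "\<dots> = (\<Sum>(p, q)\<in>weight_pairs (Suc (Suc i)). real p / (fact p * fact q))
      + 2 * (\<Sum>(p, q)\<in>weight_pairs (Suc (Suc i)). real q / (fact p * fact q))"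
    by (simp add: sum.distrib sum_distrib_left case_prod_beta)
  also have "\<dots> = inner_sum (Suc i) + 2 * inner_sum i"
    by (simp only: inner_sum_shift_p[symmetric] inner_sum_shift_q[symmetric])
  finally show ?thesis .
qed

text \<open>Having the same initial values and recurrence, the inner sums are the coefficients \<open>b\<^sub>i\<close>.\<close>
lemma inner_sum_eq_coeffB: "inner_sum i = coeffB (int i)"
proof (induction i rule: seqA.induct)
  case 1
  have "weight_pairs 0 = {(0, 0)}" by (auto simp: weight_pairs_def)
  then show ?case by (simp add: inner_sum_def coeffB_def)
next
  case 2
  have "p + 2 * q = Suc 0 \<longleftrightarrow> p = Suc 0 \<and> q = 0" for p q :: nat by arith
  then have "weight_pairs (Suc 0) = {(Suc 0, 0)}" by (auto simp: weight_pairs_def)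
  then show ?case by (simp add: inner_sum_def coeffB_def)
next
  case (3 m)
  have "real (Suc (Suc m)) * inner_sum (Suc (Suc m)) = real (Suc (Suc m)) * coeffB (int (Suc (Suc m)))"
    using inner_sum_rec[of m] coeffB_rec[of "int (Suc (Suc m))"] 3 by simp
  then show ?case by simp
qed

lemma inner_sum_closed_form:
  "(\<Sum>(p, q)\<in>{(p, q). p + 2 * q = i}. fact n / (fact p * fact q * fact (n - i)) :: real)
     = fact n / fact (n - i) * coeffB (int i)"
proof -
  have "(\<Sum>(p, q)\<in>{(p, q). p + 2 * q = i}. fact n / (fact p * fact q * fact (n - i)) :: real)
      = (\<Sum>(p, q)\<in>weight_pairs i. fact n / fact (n - i) * (1 / (fact p * fact q)))"
    unfolding weight_pairs_def by (rule sum.cong) (auto simp: field_simps)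
  also have "\<dots> = fact n / fact (n - i) * inner_sum i"
    unfolding inner_sum_def sum_distrib_left by (simp add: case_prod_beta)
  finally show ?thesis by (simp only: inner_sum_eq_coeffB)
qed

section \<open>The closed formula for \<open>a\<^sub>2\<^sub>n\<close>\<close>

text \<open>The diagonal case \<open>m = l = n\<close> of the product formula:
  \<open>a\<^sub>2\<^sub>n = (2n)! b\<^sub>2\<^sub>n = n!\<^sup>2 (2n choose n) b\<^sub>2\<^sub>n = n!\<^sup>2 S\<^sub>n(n, n)\<close>.\<close>
lemma seqA_double: "real (seqA (2 * n)) = fact n * fact n * pair_sum n (int n) (int n)"
proof -
  have "fact n * fact n * ((n + n) choose n) = (fact (n + n) :: nat)"
    using binomial_fact_lemma[of n "n + n"] by simp
  then have fact_double: "fact (n + n) = (fact n * fact n * real ((n + n) choose n) :: real)"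
    by (metis of_nat_fact of_nat_mult)
  have "pair_sum n (int n) (int n) = pair_sum (n + n) (int n) (int n)"
    by (simp add: pair_sum_stable)
  also have "\<dots> = real ((n + n) choose n) * coeffB (int (n + n))"
    by (simp add: pair_sum_product_formula)
  finally have "pair_sum n (int n) (int n) = real ((n + n) choose n) * coeffB (int (n + n))" .
  then have "fact n * fact n * pair_sum n (int n) (int n) = fact (n + n) * coeffB (int (n + n))"
    by (simp add: fact_double mult_ac)
  also have "\<dots> = real (seqA (n + n))"
    unfolding coeffB_of_nat by simp
  finally show ?thesis by (simp add: mult_2)
qed

text \<open>Reversing the summation index \<open>k = n - i\<close> turns \<open>n!\<^sup>2 S\<^sub>n(n, n)\<close> into the outer sum
  of the theorem.\<close>
lemma pair_sum_diagonal:
  "fact n * fact n * pair_sum n (int n) (int n)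
     = (\<Sum>i=0..n. (fact n / fact (n - i) * coeffB (int i)) ^ 2 * 2 ^ (n - i) * fact (n - i))"
proof -
  have "pair_sum n (int n) (int n)
      = (\<Sum>i=0..n. coeffB (int n - int (n + 0 - i)) * coeffB (int n - int (n + 0 - i))
           * 2 ^ (n + 0 - i) / fact (n + 0 - i))"
    unfolding pair_sum_def by (rule sum.atLeastAtMost_rev)
  also have "\<dots> = (\<Sum>i=0..n. coeffB (int i) * coeffB (int i) * 2 ^ (n - i) / fact (n - i))"
    by (rule sum.cong) (auto simp: of_nat_diff)
  also have "fact n * fact n * \<dots>
      = (\<Sum>i=0..n. (fact n / fact (n - i) * coeffB (int i)) ^ 2 * 2 ^ (n - i) * fact (n - i))"
    unfolding sum_distrib_left
  proof (rule sum.cong)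
    fix i
    have "(fact (n - i) :: real) \<noteq> 0" by simp
    then show "fact n * fact n * (coeffB (int i) * coeffB (int i) * 2 ^ (n - i) / fact (n - i))
        = (fact n / fact (n - i) * coeffB (int i)) ^ 2 * 2 ^ (n - i) * fact (n - i)"
      by (simp add: field_simps power2_eq_square)
  qed simp
  finally show ?thesis .
qed

text \<open>The identity of the theorem, which in fact holds for all \<open>n\<close>.\<close>
theorem seqA_double_formula:
  "real (seqA (2*n)) =
      (\<Sum>i = 0..n.
        (\<Sum>(p, q) \<in> {(p, q). p + 2*q = i}.
            fact n / (fact p * fact q * fact (n - i))) ^ 2
        * 2 ^ (n - i) * fact (n - i))"
  by (simp only: seqA_double pair_sum_diagonal inner_sum_closed_form)

theorem mainTheorem3:
  fixes n :: nat
  assumes "n \<ge> 1"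
  shows "rank_SBr n = seqA (2*n) \<and>
    real (seqA (2*n)) =
      (\<Sum>i = 0..n.
        (\<Sum>(p, q) \<in> {(p, q). p + 2*q = i}.
            fact n / (fact p * fact q * fact (n - i))) ^ 2
        * 2 ^ (n - i) * fact (n - i))"
  using rank_SBr_eq seqA_double_formula by simp

end
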